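(* Let $G$ be a group generated by $x_1,\dots,x_n$, with finite commutator subgroup $C=[G,G]$, such that $G/C$ is free abelian of rank $n$ with basis the images of $x_1,\dots,x_n$. Define $$X=\{g_{\mathbf m}\in T:\ c_{\,x_1^{m_1}x_2^{m_2}\cdots x_{k-1}^{m_{k-1}},\;x_k}=e\ \text{ for all } k=1,\dots,n\},\qquad P=X\cap \mathcal C_G(C),$$ where $\mathcal C_G(C)$ is the centralizer of $C$ in $G$. For $1\le i,j\le n$ let $V_{ij}$ be the least positive integer with $c_{x_i^{V_{ij}}x_j}=e$ and $v_i$ the least positive integer with $x_i^{v_i}\in\mathcal C_G(C)$ (these exist). Then: 1. For every generating set $\Lambda$ of $G$, the set of $\mathbf m\in\mathbb Z^n$ such that $l_{\mathbf r+\mathbf m,\lambda}=l_{\mathbf r,\lambda}$ for all $\mathbf r\in\mathbb Z^n$ and all $\lambda\in\Lambda$ is exactly $\{\mathbf m: g_{\mathbf m}\in P\}$; in particular it does not depend on $\Lambda$. 2. $P$ is a subgroup of $G$ isomorphic to $\mathbb Z^n$. 3. $P$ contains the non-trivial subgroup $P_{\mathrm{straight}}=\langle x_i^{m_i}: i=1,\dots,n\rangle$, where $m_i=\operatorname{lcm}\big(\{V_{ij}: n\ge j>i\}\cup\{v_i\}\big)$.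
   Context: Notation: $\bar g=g^{-1}$; the commutator is $c_{gh}=\bar g\,\bar h\,g\,h$; $c^{(g)}=\bar g\,c\,g$. For $\mathbf r\in\mathbb Z^n$ put $g_{\mathbf r}=x_1^{r_1}x_2^{r_2}\cdots x_n^{r_n}$ and $T=\{g_{\mathbf r}:\mathbf r\in\mathbb Z^n\}$ (Schreier transversal). Every $g\in G$ decomposes uniquely as $g=g_{\mathbf r}c$ with $c\in C$; write $\mathbf r_g=\mathbf r$ (the image of $g$ in $G/C\cong\mathbb Z^n$). For $\mathbf r\in\mathbb Z^n$ and $\lambda\in G$ the link is $l_{\mathbf r,\lambda}=\overline{g_{\mathbf r+\mathbf r_\lambda}}\,\lambda\,g_{\mathbf r}\in C$. *)

theory Defs
  imports "HOL-Algebra.Algebra"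
begin

definition comm :: "('a, 'b) monoid_scheme \<Rightarrow> 'a \<Rightarrow> 'a \<Rightarrow> 'a" where
  "comm G g h = inv\<^bsub>G\<^esub> g \<otimes>\<^bsub>G\<^esub> inv\<^bsub>G\<^esub> h \<otimes>\<^bsub>G\<^esub> g \<otimes>\<^bsub>G\<^esub> h"

text \<open>Z^n, realised as integer vectors indexed by 0..n-1 (zero outside).\<close>
definition Zn :: "nat \<Rightarrow> (nat \<Rightarrow> int) set" where
  "Zn n = {r. \<forall>i\<ge>n. r i = 0}"

definition Zn_group :: "nat \<Rightarrow> (nat \<Rightarrow> int) monoid" where
  "Zn_group n = \<lparr>carrier = Zn n, monoid.mult = (\<lambda>r s i. r i + s i), one = (\<lambda>i. 0)\<rparr>"

text \<open>Ordered product x_0^{r_0} x_1^{r_1} ... x_{k-1}^{r_{k-1}}; g_r = gprod G x r n.\<close>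
fun gprod :: "('a, 'b) monoid_scheme \<Rightarrow> (nat \<Rightarrow> 'a) \<Rightarrow> (nat \<Rightarrow> int) \<Rightarrow> nat \<Rightarrow> 'a" where
  "gprod G x r 0 = \<one>\<^bsub>G\<^esub>"
| "gprod G x r (Suc k) = gprod G x r k \<otimes>\<^bsub>G\<^esub> (x k [^]\<^bsub>G\<^esub> r k)"

definition transversal :: "('a, 'b) monoid_scheme \<Rightarrow> (nat \<Rightarrow> 'a) \<Rightarrow> nat \<Rightarrow> 'a set" where
  "transversal G x n = (\<lambda>r. gprod G x r n) ` Zn n"

definition rvec :: "('a, 'b) monoid_scheme \<Rightarrow> (nat \<Rightarrow> 'a) \<Rightarrow> nat \<Rightarrow> 'a set \<Rightarrow> 'a \<Rightarrow> (nat \<Rightarrow> int)" where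
  "rvec G x n C g = (THE r. r \<in> Zn n \<and> inv\<^bsub>G\<^esub> (gprod G x r n) \<otimes>\<^bsub>G\<^esub> g \<in> C)"

definition link :: "('a, 'b) monoid_scheme \<Rightarrow> (nat \<Rightarrow> 'a) \<Rightarrow> nat \<Rightarrow> 'a set \<Rightarrow> (nat \<Rightarrow> int) \<Rightarrow> 'a \<Rightarrow> 'a" where
  "link G x n C r l = inv\<^bsub>G\<^esub> (gprod G x (\<lambda>i. r i + rvec G x n C l i) n)
      \<otimes>\<^bsub>G\<^esub> l \<otimes>\<^bsub>G\<^esub> gprod G x r n"

definition centralizer_of :: "('a, 'b) monoid_scheme \<Rightarrow> 'a set \<Rightarrow> 'a set" where
  "centralizer_of G H = {g \<in> carrier G. \<forall>h\<in>H. g \<otimes>\<^bsub>G\<^esub> h = h \<otimes>\<^bsub>G\<^esub> g}"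

text \<open>The set X (0-indexed: for each k<n, the commutator of x_0^{m_0}...x_{k-1}^{m_{k-1}} with x_k is trivial).\<close>
definition Xset :: "('a, 'b) monoid_scheme \<Rightarrow> (nat \<Rightarrow> 'a) \<Rightarrow> nat \<Rightarrow> 'a set" where
  "Xset G x n = {gprod G x m n | m. m \<in> Zn n \<and>
      (\<forall>k<n. comm G (gprod G x m k) (x k) = \<one>\<^bsub>G\<^esub>)}"

definition Pset :: "('a, 'b) monoid_scheme \<Rightarrow> (nat \<Rightarrow> 'a) \<Rightarrow> nat \<Rightarrow> 'a set \<Rightarrow> 'a set" where
  "Pset G x n C = Xset G x n \<inter> centralizer_of G C"

definition Vexp :: "('a, 'b) monoid_scheme \<Rightarrow> (nat \<Rightarrow> 'a) \<Rightarrow> nat \<Rightarrow> nat \<Rightarrow> nat" where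
  "Vexp G x i j = (LEAST V::nat. 0 < V \<and> comm G (x i [^]\<^bsub>G\<^esub> V) (x j) = \<one>\<^bsub>G\<^esub>)"

definition vexp :: "('a, 'b) monoid_scheme \<Rightarrow> (nat \<Rightarrow> 'a) \<Rightarrow> 'a set \<Rightarrow> nat \<Rightarrow> nat" where
  "vexp G x C i = (LEAST v::nat. 0 < v \<and> x i [^]\<^bsub>G\<^esub> v \<in> centralizer_of G C)"

definition mexp :: "('a, 'b) monoid_scheme \<Rightarrow> (nat \<Rightarrow> 'a) \<Rightarrow> nat \<Rightarrow> 'a set \<Rightarrow> nat \<Rightarrow> nat" where
  "mexp G x n C i = Lcm ({Vexp G x i j | j. i < j \<and> j < n} \<union> {vexp G x C i})"

definition P_straight :: "('a, 'b) monoid_scheme \<Rightarrow> (nat \<Rightarrow> 'a) \<Rightarrow> nat \<Rightarrow> 'a set \<Rightarrow> 'a set" where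
  "P_straight G x n C = generate G {x i [^]\<^bsub>G\<^esub> mexp G x n C i | i. i < n}"

end

theory Submission
  imports Defs
begin

(* Write g_r = x_0^r_0 ... x_(n-1)^r_(n-1). Shifting by m is multiplicative, g_(s+m) = g_s g_m for
   all s, exactly when every x_0^m_0 ... x_(k-1)^m_(k-1) commutes with x_k, i.e. when g_m lies in X.
   Links satisfy the cocycle rule l_(r, a b) = l_(r + r_b, a) l_(r, b), so a vector m is a period of
   the links of a generating set iff it is a period of the links of every element of G. Testing this
   on elements of C and on the g_s shows that the periods are exactly the m with g_m in X and g_m
   centralising C; conversely, such an m changes every link by conjugation with g_m, which fixes C
   pointwise. So the periods form a subgroup of Z^n mapped isomorphically onto P by m |-> g_m.
   Because C is finite, a pigeonhole argument gives positive powers of x_i that centralise C and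
   commute with x_j, so the periods contain a positive multiple m_i e_i of every unit vector; a
   subgroup of Z^n with this property has a triangular basis, hence is isomorphic to Z^n. The same
   vectors give P_straight <= P, and x_0^m_0 is not 1 since the cosets C g_r are pairwise distinct. *)

section \<open>Commuting elements and their powers\<close>

lemma (in group) comm_eq_one_iff:
  assumes "a \<in> carrier G" "b \<in> carrier G"
  shows "comm G a b = \<one> \<longleftrightarrow> a \<otimes> b = b \<otimes> a"
proof -
  have comm: "comm G a b = inv (b \<otimes> a) \<otimes> (a \<otimes> b)"
    using assms by (simp add: comm_def inv_mult_group m_assoc)
  show ?thesis
  proof
    assume "comm G a b = \<one>"
    then have "inv (a \<otimes> b) = inv (b \<otimes> a)"
      using comm assms by (simp add: inv_equality)
    then show "a \<otimes> b = b \<otimes> a"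
      using assms by (metis inv_inv m_closed)
  qed (use comm assms in simp)
qed

lemma (in group) mult_inv_cancel_left [simp]:
  "a \<in> carrier G \<Longrightarrow> b \<in> carrier G \<Longrightarrow> a \<otimes> (inv a \<otimes> b) = b"
  by (simp add: m_assoc[symmetric])

lemma (in group) inv_mult_cancel_left [simp]:
  "a \<in> carrier G \<Longrightarrow> b \<in> carrier G \<Longrightarrow> inv a \<otimes> (a \<otimes> b) = b"
  by (simp add: m_assoc[symmetric])

lemma (in group) inv_commute:
  assumes "a \<otimes> b = b \<otimes> a" "a \<in> carrier G" "b \<in> carrier G"
  shows "inv a \<otimes> b = b \<otimes> inv a"
proof -
  have "inv a \<otimes> b = inv a \<otimes> (b \<otimes> a) \<otimes> inv a"
    using assms(2,3) by (simp add: m_assoc)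
  also have "\<dots> = inv a \<otimes> (a \<otimes> b) \<otimes> inv a"
    by (simp only: assms(1))
  also have "\<dots> = b \<otimes> inv a"
    using assms(2,3) by (simp add: m_assoc[symmetric])
  finally show ?thesis .
qed

lemma (in group) int_pow_commute:
  assumes "a \<otimes> b = b \<otimes> a" "a \<in> carrier G" "b \<in> carrier G"
  shows "a [^] (i::int) \<otimes> b = b \<otimes> a [^] i"
proof -
  have pow: "a [^] k \<otimes> b = b \<otimes> a [^] k" for k :: nat
    using group_commutes_pow[OF assms] .
  show ?thesis
  proof (cases "i < 0")
    case True
    then show ?thesis
      using inv_commute[OF pow nat_pow_closed[OF assms(2)] assms(3)]
      by (simp only: int_pow_def2 True if_True)
  next
    case False
    then show ?thesis
      using pow by (simp only: int_pow_def2 False if_False)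
  qed
qed

lemma (in group) nat_pow_dvd_commute:
  assumes "a \<in> carrier G" "b \<in> carrier G" "a [^] V \<otimes> b = b \<otimes> a [^] V" "(V::nat) dvd M"
  shows "a [^] M \<otimes> b = b \<otimes> a [^] M"
proof -
  obtain k where "M = V * k" using assms(4) by blast
  then have "a [^] M = (a [^] V) [^] k" using assms(1) by (simp add: nat_pow_pow)
  then show ?thesis using group_commutes_pow[OF assms(3)] assms by simp
qed

lemma pigeonhole_nat:
  assumes "finite A" "\<And>k::nat. f k \<in> A"
  shows "\<exists>k1 k2. k1 < k2 \<and> f k1 = f k2"
proof -
  have "\<not> inj f"
    using assms finite_imageD[of f UNIV] finite_subset[of "range f" A] by auto
  then obtain a b where "a \<noteq> b" "f a = f b" unfolding inj_def by auto
  then show ?thesis by (metis linorder_neqE_nat)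
qed

lemma (in group) conj_nat_pow_eq_imp_commute:
  assumes a: "a \<in> carrier G" and b: "b \<in> carrier G" and k: "(k1::nat) < k2"
    and conj: "a [^] k1 \<otimes> b \<otimes> inv (a [^] k1) = a [^] k2 \<otimes> b \<otimes> inv (a [^] k2)"
  shows "a [^] (k2 - k1) \<otimes> b = b \<otimes> a [^] (k2 - k1)"
proof -
  define A D where "A = a [^] k1" and "D = a [^] (k2 - k1)"
  have AD: "A \<in> carrier G" "D \<in> carrier G" using a by (auto simp: A_def D_def)
  have "a [^] k2 = A \<otimes> D" using a k by (simp add: A_def D_def nat_pow_mult)
  then have "A \<otimes> (b \<otimes> inv A) = A \<otimes> (D \<otimes> b \<otimes> inv D \<otimes> inv A)"
    using conj AD b by (simp add: A_def[symmetric] inv_mult_group m_assoc)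
  then have "b = D \<otimes> b \<otimes> inv D" using AD b by simp
  then have "b \<otimes> D = D \<otimes> b \<otimes> inv D \<otimes> D" by simp
  then show ?thesis unfolding D_def[symmetric] using AD b by (simp add: m_assoc)
qed

lemma (in group) nat_pow_centralizes_if_finite_conjugates:
  assumes a: "a \<in> carrier G" and S: "S \<subseteq> carrier G" "finite S" and "finite B"
    and conj: "\<And>k c. c \<in> S \<Longrightarrow> a [^] (k::nat) \<otimes> c \<otimes> inv (a [^] k) \<in> B"
  shows "\<exists>d::nat>0. \<forall>c\<in>S. a [^] d \<otimes> c = c \<otimes> a [^] d"
proof -
  define f where "f k = restrict (\<lambda>c. a [^] (k::nat) \<otimes> c \<otimes> inv (a [^] k)) S" for k
  have "finite (S \<rightarrow>\<^sub>E B)"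
    using S(2) \<open>finite B\<close> by (rule finite_PiE)
  moreover have "f k \<in> S \<rightarrow>\<^sub>E B" for k
    unfolding f_def using conj by (simp add: restrict_PiE_iff)
  ultimately obtain k1 k2 where k: "k1 < k2" "f k1 = f k2"
    using pigeonhole_nat by metis
  have "a [^] (k2 - k1) \<otimes> c = c \<otimes> a [^] (k2 - k1)" if c: "c \<in> S" for c
  proof (rule conj_nat_pow_eq_imp_commute[OF a _ k(1)])
    show "c \<in> carrier G" using c S(1) by blast
    show "a [^] k1 \<otimes> c \<otimes> inv (a [^] k1) = a [^] k2 \<otimes> c \<otimes> inv (a [^] k2)"
      using fun_cong[OF k(2), of c] c by (simp add: f_def)
  qed
  moreover have "0 < k2 - k1" using k(1) by simp
  ultimately show ?thesis by blast
qed

lemma (in group) subgroup_centralizer_of: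
  assumes "H \<subseteq> carrier G"
  shows "subgroup (centralizer_of G H) G"
proof (rule subgroupI)
  have "\<one> \<in> centralizer_of G H"
    using assms by (auto simp: centralizer_of_def)
  then show "centralizer_of G H \<subseteq> carrier G" "centralizer_of G H \<noteq> {}"
    by (auto simp: centralizer_of_def)
next
  fix a assume a: "a \<in> centralizer_of G H"
  have "inv a \<otimes> h = h \<otimes> inv a" if "h \<in> H" for h
    using a that assms inv_commute[of a h] by (auto simp: centralizer_of_def)
  then show "inv a \<in> centralizer_of G H"
    using a by (simp add: centralizer_of_def)
next
  fix a b assume a: "a \<in> centralizer_of G H" and b: "b \<in> centralizer_of G H"
  have "a \<otimes> b \<otimes> h = h \<otimes> (a \<otimes> b)" if h: "h \<in> H" for h
  proof -
    have ah: "a \<otimes> h = h \<otimes> a" and bh: "b \<otimes> h = h \<otimes> b"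
      using a b h by (auto simp: centralizer_of_def)
    have car: "a \<in> carrier G" "b \<in> carrier G" "h \<in> carrier G"
      using a b h assms by (auto simp: centralizer_of_def)
    have "a \<otimes> b \<otimes> h = a \<otimes> (h \<otimes> b)"
      using car by (simp add: m_assoc bh)
    also have "\<dots> = h \<otimes> (a \<otimes> b)"
      using car by (simp add: m_assoc[symmetric] ah)
    finally show ?thesis .
  qed
  then show "a \<otimes> b \<in> centralizer_of G H"
    using a b by (auto simp: centralizer_of_def)
qed

section \<open>Subgroups of \<open>\<int>\<^sup>n\<close>\<close>

lemma Zn_group_is_group: "group (Zn_group n)"
proof (rule groupI)
  fix a assume "a \<in> carrier (Zn_group n)"
  then have "(\<lambda>i. - a i) \<in> carrier (Zn_group n)"
    and "(\<lambda>i. - a i) \<otimes>\<^bsub>Zn_group n\<^esub> a = \<one>\<^bsub>Zn_group n\<^esub>"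
    by (simp_all add: Zn_group_def Zn_def)
  then show "\<exists>b\<in>carrier (Zn_group n). b \<otimes>\<^bsub>Zn_group n\<^esub> a = \<one>\<^bsub>Zn_group n\<^esub>" by blast
qed (auto simp: Zn_group_def Zn_def algebra_simps)

lemma Zn_group_inv: "a \<in> Zn n \<Longrightarrow> inv\<^bsub>Zn_group n\<^esub> a = (\<lambda>i. - a i)"
  by (rule group.inv_equality[OF Zn_group_is_group]) (auto simp: Zn_group_def Zn_def)

lemma subgroup_Zn_group_iff:
  "subgroup H (Zn_group n) \<longleftrightarrow>
     H \<subseteq> Zn n \<and> (\<lambda>i. 0) \<in> H \<and> (\<forall>a\<in>H. \<forall>b\<in>H. (\<lambda>i. a i + b i) \<in> H) \<and> (\<forall>a\<in>H. (\<lambda>i. - a i) \<in> H)"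
proof
  assume H: "subgroup H (Zn_group n)"
  then have sub: "H \<subseteq> Zn n" using subgroup.subset by (fastforce simp: Zn_group_def)
  moreover have "(\<lambda>i. - a i) \<in> H" if "a \<in> H" for a
    using subgroup.m_inv_closed[OF H that] Zn_group_inv[of a n] that sub by auto
  ultimately show "H \<subseteq> Zn n \<and> (\<lambda>i. 0) \<in> H \<and> (\<forall>a\<in>H. \<forall>b\<in>H. (\<lambda>i. a i + b i) \<in> H)
      \<and> (\<forall>a\<in>H. (\<lambda>i. - a i) \<in> H)"
    using subgroup.one_closed[OF H] subgroup.m_closed[OF H] by (auto simp: Zn_group_def)
next
  assume "H \<subseteq> Zn n \<and> (\<lambda>i. 0) \<in> H \<and> (\<forall>a\<in>H. \<forall>b\<in>H. (\<lambda>i. a i + b i) \<in> H)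
      \<and> (\<forall>a\<in>H. (\<lambda>i. - a i) \<in> H)"
  then show "subgroup H (Zn_group n)"
    by (intro group.subgroupI[OF Zn_group_is_group])
      (auto simp: Zn_group_def Zn_group_inv[unfolded Zn_group_def] subset_iff)
qed

lemma subgroup_Zn_group_smult:
  assumes H: "subgroup H (Zn_group n)" and a: "a \<in> H"
  shows "(\<lambda>i. t * a i) \<in> H"
proof -
  have closed: "(\<lambda>i. 0) \<in> H" "\<And>a b. a \<in> H \<Longrightarrow> b \<in> H \<Longrightarrow> (\<lambda>i. a i + b i) \<in> H"
    "\<And>a. a \<in> H \<Longrightarrow> (\<lambda>i. - a i) \<in> H"
    using H by (auto simp: subgroup_Zn_group_iff)
  have nat: "(\<lambda>i. int k * a i) \<in> H" for k
  proof (induction k)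
    case (Suc k)
    then show ?case using closed(2)[OF Suc a] by (simp add: algebra_simps)
  qed (simp add: closed(1))
  show ?thesis
  proof (cases "t \<ge> 0")
    case True
    then show ?thesis using nat[of "nat t"] by simp
  next
    case False
    then show ?thesis using closed(3)[OF nat[of "nat (- t)"]] by simp
  qed
qed

lemma subgroup_Zn_group_coord_dvd:
  assumes H: "subgroup H (Zn_group n)" and h0: "h0 \<in> H" "h0 k \<noteq> 0"
  shows "\<exists>d\<in>H. d k > 0 \<and> (\<forall>h\<in>H. d k dvd h k)"
proof -
  have add: "\<And>a b. a \<in> H \<Longrightarrow> b \<in> H \<Longrightarrow> (\<lambda>i. a i + b i) \<in> H"
    using H by (simp add: subgroup_Zn_group_iff)
  define S where "S = {nat (h k) | h. h \<in> H \<and> h k > 0}"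
  have "nat \<bar>h0 k\<bar> \<in> S"
    using h0 subgroup_Zn_group_smult[OF H h0(1), of "sgn (h0 k)"]
    unfolding S_def by (intro CollectI exI[of _ "\<lambda>i. sgn (h0 k) * h0 i"])
      (simp add: mult.commute[of "sgn (h0 k)"] abs_sgn[symmetric])
  then have "(LEAST s. s \<in> S) \<in> S" by (rule LeastI)
  then obtain d where d: "d \<in> H" "d k > 0" "nat (d k) = (LEAST s. s \<in> S)"
    unfolding S_def by auto
  have "d k dvd h k" if h: "h \<in> H" for h
  proof (rule ccontr)
    assume "\<not> d k dvd h k"
    then have pos: "h k mod d k > 0" using d(2) by (simp add: dvd_eq_mod_eq_0 order_le_neq_trans)
    define r where "r = (\<lambda>i. h i + (- (h k div d k)) * d i)"
    have "r \<in> H"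
      unfolding r_def using add[OF h subgroup_Zn_group_smult[OF H d(1)]] .
    moreover have "r k = h k mod d k"
      unfolding r_def by (simp add: minus_div_mult_eq_mod[symmetric] algebra_simps)
    ultimately have "nat (h k mod d k) \<in> S"
      unfolding S_def using pos by (metis (mono_tags, lifting) mem_Collect_eq)
    then have "nat (d k) \<le> nat (h k mod d k)" unfolding d(3) by (rule Least_le)
    then show False using pos_mod_bound[OF d(2), of "h k"] pos by simp
  qed
  then show ?thesis using d by blast
qed

definition lincomb :: "nat \<Rightarrow> (nat \<Rightarrow> nat \<Rightarrow> int) \<Rightarrow> (nat \<Rightarrow> int) \<Rightarrow> nat \<Rightarrow> int" where
  "lincomb n b c = (\<lambda>j. \<Sum>k<n. c k * b k j)"

lemma lincomb_add: "lincomb n b (\<lambda>i. c i + c' i) = (\<lambda>j. lincomb n b c j + lincomb n b c' j)"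
  by (simp add: lincomb_def fun_eq_iff distrib_right sum.distrib)

lemma lincomb_Suc: "lincomb (Suc n) b c = (\<lambda>j. lincomb n b c j + c n * b n j)"
  by (simp add: lincomb_def)

lemma lincomb_cong: "(\<And>k. k < n \<Longrightarrow> c k = c' k) \<Longrightarrow> lincomb n b c = lincomb n b c'"
  by (simp add: lincomb_def)

lemma lincomb_cong_basis: "(\<And>k. k < n \<Longrightarrow> b k = b' k) \<Longrightarrow> lincomb n b c = lincomb n b' c"
  by (simp add: lincomb_def)

lemma mem_Zn_iff_Suc: "h \<in> Zn n \<longleftrightarrow> h \<in> Zn (Suc n) \<and> h n = 0"
  by (auto simp: Zn_def) (metis le_antisym not_less_eq_eq)

lemma lincomb_Suc_upd:
  "lincomb (Suc n) (b(n := d)) c = (\<lambda>j. lincomb n b (c(n := 0)) j + c n * d j)"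
proof -
  have "lincomb n b (c(n := 0)) = lincomb n b c" by (rule lincomb_cong) simp
  then show ?thesis
    unfolding lincomb_Suc by (simp add: lincomb_cong_basis[of n "b(n := d)" b])
qed

lemma lattice_basis_extend_inj:
  assumes b: "bij_betw (lincomb n b) (Zn n) {h \<in> H. h n = 0}" and d: "d n \<noteq> 0"
  shows "inj_on (lincomb (Suc n) (b(n := d))) (Zn (Suc n))"
proof (rule inj_onI)
  fix c c' assume c: "c \<in> Zn (Suc n)" and c': "c' \<in> Zn (Suc n)"
    and eq: "lincomb (Suc n) (b(n := d)) c = lincomb (Suc n) (b(n := d)) c'"
  have lower: "c(n := 0) \<in> Zn n" "c'(n := 0) \<in> Zn n"
    using c c' by (auto simp: Zn_def)
  have "c n * d n = c' n * d n"
    using fun_cong[OF eq, of n] bij_betwE[OF b] lower unfolding lincomb_Suc_upd by auto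
  then have last: "c n = c' n" using d by simp
  then have "lincomb n b (c(n := 0)) = lincomb n b (c'(n := 0))"
    using eq unfolding lincomb_Suc_upd by (simp add: fun_eq_iff)
  then have "c(n := 0) = c'(n := 0)"
    using bij_betw_imp_inj_on[OF b] lower by (simp add: inj_on_def)
  then show "c = c'" using last by (metis fun_upd_idem_iff fun_upd_upd)
qed

lemma lattice_basis_extend_image:
  assumes H: "subgroup H (Zn_group (Suc n))"
    and b: "bij_betw (lincomb n b) (Zn n) {h \<in> H. h n = 0}"
    and d: "d \<in> H" "\<forall>h\<in>H. d n dvd h n"
  shows "lincomb (Suc n) (b(n := d)) ` Zn (Suc n) = H"
proof (intro equalityI subsetI)
  have add: "\<And>a b. a \<in> H \<Longrightarrow> b \<in> H \<Longrightarrow> (\<lambda>i. a i + b i) \<in> H"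
    using H by (simp add: subgroup_Zn_group_iff)
  {
    fix h assume "h \<in> lincomb (Suc n) (b(n := d)) ` Zn (Suc n)"
    then obtain c where c: "c \<in> Zn (Suc n)" "h = lincomb (Suc n) (b(n := d)) c" by blast
    then have "lincomb n b (c(n := 0)) \<in> H"
      using bij_betwE[OF b] by (auto simp: Zn_def)
    then show "h \<in> H"
      using add subgroup_Zn_group_smult[OF H d(1)] c(2) unfolding lincomb_Suc_upd by simp
  }
  fix h assume h: "h \<in> H"
  define t where "t = h n div d n"
  have "h n = t * d n" using d(2) h unfolding t_def by simp
  define h' where "h' = (\<lambda>i. h i + (- t) * d i)"
  have "h' \<in> H" unfolding h'_def using add[OF h subgroup_Zn_group_smult[OF H d(1)]] .
  moreover have "h' n = 0" unfolding h'_def using \<open>h n = t * d n\<close> by simp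
  ultimately obtain c' where c': "c' \<in> Zn n" "lincomb n b c' = h'"
    using bij_betw_imp_surj_on[OF b] by (metis (mono_tags, lifting) image_iff mem_Collect_eq)
  have "c' n = 0" using c'(1) by (simp add: Zn_def)
  then have "c'(n := t) \<in> Zn (Suc n)" "(c'(n := t))(n := 0) = c'"
    using c'(1) by (auto simp: Zn_def)
  moreover have "lincomb (Suc n) (b(n := d)) (c'(n := t)) = h"
    unfolding lincomb_Suc_upd using calculation(2) c'(2) by (simp add: h'_def)
  ultimately show "h \<in> lincomb (Suc n) (b(n := d)) ` Zn (Suc n)" by (metis imageI)
qed

lemma subgroup_Zn_group_basis:
  assumes "subgroup H (Zn_group n)"
    and "\<forall>i<n. \<exists>t>0. (\<lambda>j. if j = i then t else 0) \<in> H"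
  shows "\<exists>b. bij_betw (lincomb n b) (Zn n) H"
  using assms
proof (induction n arbitrary: H)
  case 0
  then have "H = {\<lambda>i. 0}" by (auto simp: subgroup_Zn_group_iff Zn_def)
  moreover have "Zn 0 = {\<lambda>i. 0}" by (auto simp: Zn_def)
  ultimately show ?case by (auto simp: lincomb_def bij_betw_def)
next
  case (Suc n)
  define H' where "H' = {h \<in> H. h n = 0}"
  have "subgroup H' (Zn_group n)"
    using Suc.prems(1) mem_Zn_iff_Suc[of _ n] unfolding subgroup_Zn_group_iff H'_def
    by auto
  moreover have "\<forall>i<n. \<exists>t>0. (\<lambda>j. if j = i then t else 0) \<in> H'"
    using Suc.prems(2) unfolding H'_def by fastforce
  ultimately obtain b where b: "bij_betw (lincomb n b) (Zn n) H'"
    using Suc.IH by blast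
  obtain t where "(\<lambda>j. if j = n then t else 0) \<in> H" "(\<lambda>j. if j = n then t else 0) n \<noteq> 0"
    using Suc.prems(2) by fastforce
  then obtain d where d: "d \<in> H" "d n > 0" "\<forall>h\<in>H. d n dvd h n"
    using subgroup_Zn_group_coord_dvd[OF Suc.prems(1)] by blast
  have "inj_on (lincomb (Suc n) (b(n := d))) (Zn (Suc n))"
    using lattice_basis_extend_inj[OF b[unfolded H'_def]] d(2) by simp
  moreover have "lincomb (Suc n) (b(n := d)) ` Zn (Suc n) = H"
    using lattice_basis_extend_image[OF Suc.prems(1) b[unfolded H'_def] d(1,3)] .
  ultimately show ?case unfolding bij_betw_def by blast
qed

lemma Zn_group_iso_subgroup:
  assumes "subgroup H (Zn_group n)"
    and "\<forall>i<n. \<exists>t>0. (\<lambda>j. if j = i then t else 0) \<in> H"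
  shows "Zn_group n \<cong> (Zn_group n)\<lparr>carrier := H\<rparr>"
proof -
  obtain b where b: "bij_betw (lincomb n b) (Zn n) H"
    using subgroup_Zn_group_basis[OF assms] by blast
  then have "lincomb n b \<in> hom (Zn_group n) ((Zn_group n)\<lparr>carrier := H\<rparr>)"
    by (auto simp: hom_def Zn_group_def lincomb_add bij_betw_def)
  then show ?thesis
    using b by (auto simp: is_iso_def iso_def Zn_group_def)
qed

section \<open>Ordered products of the generators\<close>

locale ordered_products = group G for G (structure) +
  fixes x :: "nat \<Rightarrow> 'a" and n :: nat
  assumes gens_closed: "\<And>i. i < n \<Longrightarrow> x i \<in> carrier G"
begin

lemma gprod_closed: "k \<le> n \<Longrightarrow> gprod G x r k \<in> carrier G"
  by (induction k) (auto simp: gens_closed)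

lemma gprod_closed_top [simp]: "gprod G x r n \<in> carrier G"
  by (simp add: gprod_closed)

lemma gprod_zero [simp]: "gprod G x (\<lambda>i. 0) k = \<one>"
  by (induction k) auto

lemma gprod_cong: "(\<And>i. i < k \<Longrightarrow> r i = s i) \<Longrightarrow> gprod G x r k = gprod G x s k"
  by (induction k) auto

lemma gprod_single:
  "k \<le> n \<Longrightarrow> gprod G x (\<lambda>j. if j = i then a else 0) k = (if k \<le> i then \<one> else x i [^] a)"
proof (induction k)
  case (Suc k)
  then show ?case using gens_closed[of i] gens_closed[of k]
    by (cases "i = k") (auto simp: not_le)
qed simp

lemma gprod_add_if_commute:
  assumes comm: "\<forall>j<k. comm G (gprod G x m j) (x j) = \<one>" and "k \<le> n"
  shows "gprod G x (\<lambda>i. s i + m i) k = gprod G x s k \<otimes> gprod G x m k"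
  using assms(2) comm
proof (induction k)
  case (Suc k)
  have xk: "x k \<in> carrier G" using gens_closed Suc.prems by simp
  have ps: "gprod G x s k \<in> carrier G" "gprod G x m k \<in> carrier G"
    using gprod_closed Suc.prems by auto
  have "gprod G x m k \<otimes> x k = x k \<otimes> gprod G x m k"
    using Suc.prems comm_eq_one_iff[OF ps(2) xk] by simp
  then have swap: "x k [^] s k \<otimes> gprod G x m k = gprod G x m k \<otimes> x k [^] s k"
    using int_pow_commute[OF _ xk ps(2)] by metis
  have "gprod G x (\<lambda>i. s i + m i) (Suc k)
      = gprod G x s k \<otimes> (gprod G x m k \<otimes> x k [^] s k) \<otimes> x k [^] m k"
    using Suc ps xk by (simp add: int_pow_mult m_assoc)
  also have "\<dots> = gprod G x s (Suc k) \<otimes> gprod G x m (Suc k)"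
    using ps xk by (simp add: swap[symmetric] m_assoc)
  finally show ?case .
qed simp

lemma gprod_add_single:
  assumes "k < N" "N \<le> n"
  shows "gprod G x (\<lambda>i. (if i = k then 1 else 0) + m i) N
       = gprod G x m k \<otimes> x k \<otimes> inv (gprod G x m k) \<otimes> gprod G x m N"
  using assms
proof (induction N)
  case (Suc N)
  have xk: "x k \<in> carrier G" and p: "gprod G x m k \<in> carrier G"
    using gens_closed gprod_closed Suc.prems by auto
  show ?case
  proof (cases "N = k")
    case True
    have "gprod G x (\<lambda>i. (if i = k then 1 else 0) + m i) k = gprod G x m k"
      by (rule gprod_cong) simp
    then show ?thesis using True p xk
      by (simp add: int_pow_mult m_assoc)
  next
    case False
    then show ?thesis
      using Suc p xk gens_closed[of N] gprod_closed[of N] by (simp add: m_assoc)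
  qed
qed simp

lemma gprod_add_right_iff_commute:
  "(\<forall>s\<in>Zn n. gprod G x (\<lambda>i. s i + m i) n = gprod G x s n \<otimes> gprod G x m n)
   \<longleftrightarrow> (\<forall>k<n. comm G (gprod G x m k) (x k) = \<one>)"
proof
  assume add: "\<forall>s\<in>Zn n. gprod G x (\<lambda>i. s i + m i) n = gprod G x s n \<otimes> gprod G x m n"
  show "\<forall>k<n. comm G (gprod G x m k) (x k) = \<one>"
  proof (intro allI impI)
    fix k assume k: "k < n"
    let ?p = "gprod G x m k"
    have xk: "x k \<in> carrier G" and p: "?p \<in> carrier G"
      using gens_closed gprod_closed k by auto
    have "?p \<otimes> x k \<otimes> inv ?p \<otimes> gprod G x m n
        = gprod G x (\<lambda>i. (if i = k then 1 else 0) + m i) n"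
      using gprod_add_single[OF k order_refl] by simp
    also have "\<dots> = x k \<otimes> gprod G x m n"
      using add k gprod_single[of n k 1] xk by (simp add: Zn_def)
    finally have "?p \<otimes> x k \<otimes> inv ?p = x k"
      using p xk by simp
    then have "?p \<otimes> x k = x k \<otimes> ?p"
      using p xk by (metis inv_solve_right m_closed)
    then show "comm G ?p (x k) = \<one>"
      using comm_eq_one_iff p xk by simp
  qed
qed (simp add: gprod_add_if_commute)

definition shift_vecs :: "(nat \<Rightarrow> int) set" where
  "shift_vecs = {m \<in> Zn n. \<forall>s\<in>Zn n. gprod G x (\<lambda>i. s i + m i) n = gprod G x s n \<otimes> gprod G x m n}"

lemma shift_vecs_iff_commute:
  "m \<in> shift_vecs \<longleftrightarrow> m \<in> Zn n \<and> (\<forall>k<n. comm G (gprod G x m k) (x k) = \<one>)"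
  unfolding shift_vecs_def using gprod_add_right_iff_commute by blast

lemma gprod_add_shift_vec:
  "m \<in> shift_vecs \<Longrightarrow> s \<in> Zn n \<Longrightarrow> gprod G x (\<lambda>i. s i + m i) n = gprod G x s n \<otimes> gprod G x m n"
  by (simp add: shift_vecs_def)

lemma gprod_neg_shift_vec:
  assumes m: "m \<in> shift_vecs"
  shows "gprod G x (\<lambda>i. - m i) n = inv (gprod G x m n)"
proof -
  have "(\<lambda>i. - m i) \<in> Zn n" using m by (simp add: shift_vecs_def Zn_def)
  then have "gprod G x (\<lambda>i. - m i) n \<otimes> gprod G x m n = \<one>"
    using gprod_add_shift_vec[OF m] by fastforce
  then show ?thesis by (simp add: inv_equality)
qed

lemma subgroup_shift_vecs: "subgroup shift_vecs (Zn_group n)"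
  unfolding subgroup_Zn_group_iff
proof (intro conjI ballI)
  show "shift_vecs \<subseteq> Zn n" "(\<lambda>i. 0) \<in> shift_vecs"
    by (auto simp: shift_vecs_def Zn_def)
next
  fix m m' assume m: "m \<in> shift_vecs" and m': "m' \<in> shift_vecs"
  have "gprod G x (\<lambda>i. s i + (m i + m' i)) n = gprod G x s n \<otimes> gprod G x (\<lambda>i. m i + m' i) n"
    if s: "s \<in> Zn n" for s
  proof -
    have Zn: "m \<in> Zn n" "(\<lambda>i. s i + m i) \<in> Zn n"
      using m s by (auto simp: shift_vecs_def Zn_def)
    have "gprod G x (\<lambda>i. s i + (m i + m' i)) n = gprod G x (\<lambda>i. s i + m i) n \<otimes> gprod G x m' n"
      using gprod_add_shift_vec[OF m' Zn(2)] by (simp add: add.assoc)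
    then show ?thesis
      using gprod_add_shift_vec[OF m s] gprod_add_shift_vec[OF m' Zn(1)] by (simp add: m_assoc)
  qed
  then show "(\<lambda>i. m i + m' i) \<in> shift_vecs"
    using m m' by (auto simp: shift_vecs_def Zn_def)
next
  fix m assume m: "m \<in> shift_vecs"
  have "gprod G x (\<lambda>i. s i + - m i) n = gprod G x s n \<otimes> gprod G x (\<lambda>i. - m i) n"
    if s: "s \<in> Zn n" for s
  proof -
    have "(\<lambda>i. s i + - m i) \<in> Zn n" using m s by (auto simp: shift_vecs_def Zn_def)
    then have "gprod G x s n = gprod G x (\<lambda>i. s i + - m i) n \<otimes> gprod G x m n"
      using gprod_add_shift_vec[OF m] by fastforce
    then show ?thesis
      by (simp add: gprod_neg_shift_vec[OF m] m_assoc)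
  qed
  then show "(\<lambda>i. - m i) \<in> shift_vecs"
    using m by (auto simp: shift_vecs_def Zn_def)
qed

end

section \<open>Links and their periods\<close>

locale finite_by_free_abelian = ordered_products +
  fixes C :: "'a set"
  assumes C_normal: "C \<lhd> G"
    and C_finite: "finite C"
    and coset_basis: "(\<lambda>r. C #> gprod G x r n) \<in> iso (Zn_group n) (G Mod C)"
begin

lemma C_subgroup: "subgroup C G"
  using C_normal by (rule normal_imp_subgroup)

lemma C_subset: "C \<subseteq> carrier G"
  using C_subgroup by (rule subgroup.subset)

lemma rcos_eq_iff:
  assumes a: "a \<in> carrier G" and b: "b \<in> carrier G"
  shows "C #> a = C #> b \<longleftrightarrow> inv b \<otimes> a \<in> C"
proof -
  have "C #> a = C #> b \<longleftrightarrow> a \<in> C #> b"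
    using repr_independence[OF _ b C_subgroup] rcos_self[OF a C_subgroup] by auto
  also have "\<dots> \<longleftrightarrow> a \<otimes> inv b \<in> C"
    using subgroup.rcos_module[OF C_subgroup is_group b a] .
  also have "\<dots> \<longleftrightarrow> inv b \<otimes> a \<in> C"
  proof
    assume "a \<otimes> inv b \<in> C"
    then have "inv b \<otimes> (a \<otimes> inv b) \<otimes> b \<in> C"
      using normal.inv_op_closed1[OF C_normal b] by blast
    then show "inv b \<otimes> a \<in> C" using a b by (simp add: m_assoc)
  next
    assume "inv b \<otimes> a \<in> C"
    then have "b \<otimes> (inv b \<otimes> a) \<otimes> inv b \<in> C"
      using normal.inv_op_closed2[OF C_normal b] by blast
    then show "a \<otimes> inv b \<in> C" using a b by (simp add: m_assoc[symmetric])
  qed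
  finally show ?thesis .
qed

lemma rcos_gprod_add:
  assumes "r \<in> Zn n" "s \<in> Zn n"
  shows "C #> gprod G x (\<lambda>i. r i + s i) n = C #> (gprod G x r n \<otimes> gprod G x s n)"
  using hom_mult[OF iso_imp_homomorphism[OF coset_basis], of r s] assms
  by (simp add: Zn_group_def normal.rcos_sum[OF C_normal])

lemma rcos_gprod_inj: "inj_on (\<lambda>r. C #> gprod G x r n) (Zn n)"
  using coset_basis by (simp add: iso_def bij_betw_def Zn_group_def)

lemma rcos_gprod_surj:
  assumes "a \<in> carrier G"
  shows "\<exists>r\<in>Zn n. C #> a = C #> gprod G x r n"
proof -
  have "(\<lambda>r. C #> gprod G x r n) ` Zn n = rcosets C"
    using coset_basis by (simp add: iso_def bij_betw_def Zn_group_def FactGroup_def)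
  then have "C #> a \<in> (\<lambda>r. C #> gprod G x r n) ` Zn n"
    using rcosetsI[OF C_subset assms] by simp
  then show ?thesis by blast
qed

lemma gprod_inj: "inj_on (\<lambda>r. gprod G x r n) (Zn n)"
  using rcos_gprod_inj by (auto simp: inj_on_def)

lemma rvec_unique:
  assumes "a \<in> carrier G" "r \<in> Zn n" "C #> a = C #> gprod G x r n"
  shows "rvec G x n C a = r"
  unfolding rvec_def
proof (rule the_equality)
  show "r \<in> Zn n \<and> inv (gprod G x r n) \<otimes> a \<in> C"
    using assms rcos_eq_iff by simp
next
  fix r' assume r': "r' \<in> Zn n \<and> inv (gprod G x r' n) \<otimes> a \<in> C"
  then have "C #> a = C #> gprod G x r' n" "C #> a = C #> gprod G x r n"
    using assms rcos_eq_iff[OF assms(1)] by simp_all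
  then have "C #> gprod G x r' n = C #> gprod G x r n" by simp
  then show "r' = r"
    using rcos_gprod_inj r' assms(2) by (simp add: inj_on_def)
qed

lemma rvec_spec:
  assumes "a \<in> carrier G"
  shows "rvec G x n C a \<in> Zn n" "C #> a = C #> gprod G x (rvec G x n C a) n"
proof -
  obtain r where r: "r \<in> Zn n" "C #> a = C #> gprod G x r n"
    using rcos_gprod_surj[OF assms] by blast
  moreover have "rvec G x n C a = r" using rvec_unique[OF assms r] .
  ultimately show "rvec G x n C a \<in> Zn n" "C #> a = C #> gprod G x (rvec G x n C a) n"
    by simp_all
qed

lemma rvec_gprod: "s \<in> Zn n \<Longrightarrow> rvec G x n C (gprod G x s n) = s"
  by (simp add: rvec_unique)

lemma rvec_mult:
  assumes a: "a \<in> carrier G" and b: "b \<in> carrier G"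
  shows "rvec G x n C (a \<otimes> b) = (\<lambda>i. rvec G x n C a i + rvec G x n C b i)"
proof (rule rvec_unique)
  show "(\<lambda>i. rvec G x n C a i + rvec G x n C b i) \<in> Zn n"
    using rvec_spec(1)[OF a] rvec_spec(1)[OF b] by (simp add: Zn_def)
  have "C #> (a \<otimes> b) = (C #> a) <#> (C #> b)"
    using a b by (simp add: normal.rcos_sum[OF C_normal])
  also have "\<dots> = C #> (gprod G x (rvec G x n C a) n \<otimes> gprod G x (rvec G x n C b) n)"
    using rvec_spec(2)[OF a] rvec_spec(2)[OF b] by (simp add: normal.rcos_sum[OF C_normal])
  finally show "C #> (a \<otimes> b) = C #> gprod G x (\<lambda>i. rvec G x n C a i + rvec G x n C b i) n"
    using rcos_gprod_add[OF rvec_spec(1)[OF a] rvec_spec(1)[OF b]] by simp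
qed (use a b in simp)

lemma rvec_inv:
  assumes a: "a \<in> carrier G"
  shows "rvec G x n C (inv a) = (\<lambda>i. - rvec G x n C a i)"
proof -
  have "rvec G x n C (inv a \<otimes> a) = (\<lambda>i. 0)"
    using rvec_gprod[of "\<lambda>i. 0"] a by (simp add: Zn_def)
  then show ?thesis
    using rvec_mult[of "inv a" a] a by (simp add: fun_eq_iff eq_neg_iff_add_eq_0)
qed

lemma rvec_eq_zero_iff:
  assumes a: "a \<in> carrier G"
  shows "rvec G x n C a = (\<lambda>i. 0) \<longleftrightarrow> a \<in> C"
proof -
  have "rvec G x n C a = (\<lambda>i. 0) \<longleftrightarrow> C #> a = C #> \<one>"
    using rvec_unique[OF a, of "\<lambda>i. 0"] rvec_spec(2)[OF a] by (auto simp: Zn_def)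
  then show ?thesis using rcos_eq_iff[OF a] a by simp
qed

lemma commutator_in_C:
  assumes "p \<in> carrier G" "q \<in> carrier G"
  shows "p \<otimes> q \<otimes> inv p \<otimes> inv q \<in> C"
  using assms by (simp add: rvec_eq_zero_iff[symmetric] rvec_mult rvec_inv)

lemma link_in_C:
  assumes "r \<in> Zn n" "l \<in> carrier G"
  shows "link G x n C r l \<in> C"
proof -
  have "(\<lambda>i. r i + rvec G x n C l i) \<in> Zn n"
    using assms rvec_spec(1)[of l] by (simp add: Zn_def)
  then show ?thesis
    using assms by (simp add: link_def rvec_eq_zero_iff[symmetric] rvec_mult rvec_inv rvec_gprod)
qed

lemma link_mult:
  assumes "l \<in> carrier G" "u \<in> carrier G"
  shows "link G x n C r (l \<otimes> u)
       = link G x n C (\<lambda>i. r i + rvec G x n C u i) l \<otimes> link G x n C r u"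
proof -
  have "(\<lambda>i. r i + (rvec G x n C l i + rvec G x n C u i))
      = (\<lambda>i. (r i + rvec G x n C u i) + rvec G x n C l i)"
    by (simp add: fun_eq_iff algebra_simps)
  then show ?thesis
    using assms unfolding link_def rvec_mult[OF assms] by (simp add: m_assoc)
qed

lemma link_one: "link G x n C r \<one> = \<one>"
  using rvec_gprod[of "\<lambda>i. 0"] by (simp add: link_def Zn_def)

lemma link_inv:
  assumes a: "a \<in> carrier G"
  shows "link G x n C r (inv a) = inv (link G x n C (\<lambda>i. r i - rvec G x n C a i) a)"
proof -
  have "link G x n C r (inv a) \<otimes> link G x n C (\<lambda>i. r i - rvec G x n C a i) a = \<one>"
    using link_mult[of "inv a" a "\<lambda>i. r i - rvec G x n C a i"] a by (simp add: link_one)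
  then show ?thesis
    using a by (simp add: link_def inv_equality)
qed

definition link_period :: "(nat \<Rightarrow> int) \<Rightarrow> 'a \<Rightarrow> bool" where
  "link_period m a \<longleftrightarrow> (\<forall>r\<in>Zn n. link G x n C (\<lambda>i. r i + m i) a = link G x n C r a)"

lemma link_period_generate:
  assumes \<Lambda>: "\<Lambda> \<subseteq> carrier G" and periods: "\<forall>l\<in>\<Lambda>. link_period m l"
    and a: "a \<in> generate G \<Lambda>"
  shows "link_period m a"
  using a
proof (induction rule: generate.induct)
  case one
  then show ?case by (simp add: link_period_def link_one)
next
  case (incl h)
  then show ?case using periods by blast
next
  case (inv h)
  have h: "h \<in> carrier G" using inv.hyps \<Lambda> by blast
  show ?case unfolding link_period_def
  proof
    fix r assume r: "r \<in> Zn n"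
    let ?r' = "\<lambda>i. r i - rvec G x n C h i"
    have "?r' \<in> Zn n" using r rvec_spec(1)[OF h] by (simp add: Zn_def)
    moreover have "(\<lambda>i. r i + m i - rvec G x n C h i) = (\<lambda>i. ?r' i + m i)"
      by (simp add: fun_eq_iff)
    ultimately show "link G x n C (\<lambda>i. r i + m i) (inv h) = link G x n C r (inv h)"
      using periods inv.hyps by (simp add: link_inv[OF h] link_period_def)
  qed
next
  case (eng h1 h2)
  have h: "h1 \<in> carrier G" "h2 \<in> carrier G"
    using eng.hyps generate_in_carrier[OF \<Lambda>] by auto
  show ?case unfolding link_period_def
  proof
    fix r assume r: "r \<in> Zn n"
    let ?r' = "\<lambda>i. r i + rvec G x n C h2 i"
    have "?r' \<in> Zn n" using r rvec_spec(1)[OF h(2)] by (simp add: Zn_def)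
    moreover have "(\<lambda>i. r i + m i + rvec G x n C h2 i) = (\<lambda>i. ?r' i + m i)"
      by (simp add: fun_eq_iff)
    ultimately show "link G x n C (\<lambda>i. r i + m i) (h1 \<otimes> h2) = link G x n C r (h1 \<otimes> h2)"
      using eng.IH r by (simp add: link_mult[OF h] link_period_def)
  qed
qed

definition period_vecs :: "(nat \<Rightarrow> int) set" where
  "period_vecs = {m \<in> shift_vecs. gprod G x m n \<in> centralizer_of G C}"

lemma period_vec_if_link_period:
  assumes m: "m \<in> Zn n" and periods: "\<forall>a\<in>carrier G. link_period m a"
  shows "m \<in> period_vecs"
proof -
  \<comment> \<open>Compare the links at \<open>r = m\<close> and \<open>r = 0\<close>, for elements of \<open>C\<close> and for the \<open>g\<^sub>s\<close>.\<close>
  have "(\<lambda>i. 0) \<in> Zn n" by (simp add: Zn_def)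
  then have from_zero: "link G x n C m a = link G x n C (\<lambda>i. 0) a" if "a \<in> carrier G" for a
    using periods that by (fastforce simp: link_period_def)
  have "gprod G x m n \<otimes> c = c \<otimes> gprod G x m n" if c: "c \<in> C" for c
  proof -
    have "c \<in> carrier G" "rvec G x n C c = (\<lambda>i. 0)"
      using c C_subset rvec_eq_zero_iff by auto
    then have "inv (gprod G x m n) \<otimes> c \<otimes> gprod G x m n = c"
      using from_zero[of c] by (simp add: link_def)
    then have "gprod G x m n \<otimes> (inv (gprod G x m n) \<otimes> c \<otimes> gprod G x m n) = gprod G x m n \<otimes> c"
      by simp
    then show ?thesis
      using \<open>c \<in> carrier G\<close> by (simp add: m_assoc)
  qed
  then have "gprod G x m n \<in> centralizer_of G C" by (simp add: centralizer_of_def)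
  moreover have "gprod G x (\<lambda>i. s i + m i) n = gprod G x s n \<otimes> gprod G x m n" if s: "s \<in> Zn n" for s
  proof -
    have "(\<lambda>i. m i + s i) = (\<lambda>i. s i + m i)" by (simp add: fun_eq_iff)
    then have "inv (gprod G x (\<lambda>i. s i + m i) n) \<otimes> (gprod G x s n \<otimes> gprod G x m n) = \<one>"
      using from_zero[of "gprod G x s n"] s by (simp add: link_def rvec_gprod m_assoc)
    then have "gprod G x (\<lambda>i. s i + m i) n
        \<otimes> (inv (gprod G x (\<lambda>i. s i + m i) n) \<otimes> (gprod G x s n \<otimes> gprod G x m n))
        = gprod G x (\<lambda>i. s i + m i) n"
      by simp
    then show ?thesis by simp
  qed
  ultimately show "m \<in> period_vecs" using m by (simp add: period_vecs_def shift_vecs_def)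
qed

lemma link_period_if_period_vec:
  assumes "m \<in> period_vecs" and r: "r \<in> Zn n" and a: "a \<in> carrier G"
  shows "link G x n C (\<lambda>i. r i + m i) a = link G x n C r a"
proof -
  have shift: "m \<in> shift_vecs" and cent: "gprod G x m n \<in> centralizer_of G C"
    using assms(1) by (auto simp: period_vecs_def)
  let ?r' = "\<lambda>i. r i + rvec G x n C a i"
  have "?r' \<in> Zn n" using r rvec_spec(1)[OF a] by (simp add: Zn_def)
  moreover have "(\<lambda>i. r i + m i + rvec G x n C a i) = (\<lambda>i. ?r' i + m i)"
    by (simp add: algebra_simps)
  ultimately have "gprod G x (\<lambda>i. r i + m i + rvec G x n C a i) n = gprod G x ?r' n \<otimes> gprod G x m n"
    using gprod_add_shift_vec[OF shift] by simp
  then have "link G x n C (\<lambda>i. r i + m i) a = inv (gprod G x m n) \<otimes> link G x n C r a \<otimes> gprod G x m n"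
    using a r gprod_add_shift_vec[OF shift r] by (simp add: link_def inv_mult_group m_assoc)
  also have "\<dots> = inv (gprod G x m n) \<otimes> (gprod G x m n \<otimes> link G x n C r a)"
    using cent link_in_C[OF r a] a by (simp add: centralizer_of_def m_assoc link_def)
  also have "\<dots> = link G x n C r a"
    using a by (simp add: link_def)
  finally show ?thesis .
qed

lemma link_period_all_iff:
  "m \<in> Zn n \<Longrightarrow> (\<forall>a\<in>carrier G. link_period m a) \<longleftrightarrow> m \<in> period_vecs"
  using period_vec_if_link_period link_period_if_period_vec by (auto simp: link_period_def)

lemma period_vecs_subset: "period_vecs \<subseteq> Zn n"
  by (auto simp: period_vecs_def shift_vecs_def)

lemma Pset_eq_image: "Pset G x n C = (\<lambda>m. gprod G x m n) ` period_vecs"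
  by (auto simp: Pset_def Xset_def period_vecs_def shift_vecs_iff_commute)

lemma gprod_in_Pset_iff: "m \<in> Zn n \<Longrightarrow> gprod G x m n \<in> Pset G x n C \<longleftrightarrow> m \<in> period_vecs"
  using gprod_inj period_vecs_subset by (auto simp: Pset_eq_image inj_on_def)

lemma link_periods_eq_Pset:
  assumes "\<Lambda> \<subseteq> carrier G" "generate G \<Lambda> = carrier G"
  shows "{m \<in> Zn n. \<forall>r \<in> Zn n. \<forall>l \<in> \<Lambda>. link G x n C (\<lambda>i. r i + m i) l = link G x n C r l}
       = {m \<in> Zn n. gprod G x m n \<in> Pset G x n C}"
proof -
  have "(\<forall>r \<in> Zn n. \<forall>l \<in> \<Lambda>. link G x n C (\<lambda>i. r i + m i) l = link G x n C r l)
      \<longleftrightarrow> gprod G x m n \<in> Pset G x n C" if m: "m \<in> Zn n" for m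
  proof -
    have "(\<forall>r \<in> Zn n. \<forall>l \<in> \<Lambda>. link G x n C (\<lambda>i. r i + m i) l = link G x n C r l)
        \<longleftrightarrow> (\<forall>l\<in>\<Lambda>. link_period m l)"
      by (auto simp: link_period_def)
    also have "\<dots> \<longleftrightarrow> (\<forall>a\<in>carrier G. link_period m a)"
      using link_period_generate[OF assms(1)] assms by auto
    also have "\<dots> \<longleftrightarrow> gprod G x m n \<in> Pset G x n C"
      using link_period_all_iff[OF m] gprod_in_Pset_iff[OF m] by simp
    finally show ?thesis .
  qed
  then show ?thesis by blast
qed

lemma subgroup_period_vecs: "subgroup period_vecs (Zn_group n)"
proof -
  have shift: "(\<lambda>i. 0) \<in> shift_vecs"
    "\<And>a b. a \<in> shift_vecs \<Longrightarrow> b \<in> shift_vecs \<Longrightarrow> (\<lambda>i. a i + b i) \<in> shift_vecs"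
    "\<And>a. a \<in> shift_vecs \<Longrightarrow> (\<lambda>i. - a i) \<in> shift_vecs"
    using subgroup_shift_vecs unfolding subgroup_Zn_group_iff by blast+
  interpret cent: subgroup "centralizer_of G C" G
    using subgroup_centralizer_of[OF C_subset] .
  show ?thesis
    unfolding subgroup_Zn_group_iff
  proof (intro conjI ballI)
    show "period_vecs \<subseteq> Zn n" by (rule period_vecs_subset)
    show "(\<lambda>i. 0) \<in> period_vecs" using shift(1) by (simp add: period_vecs_def)
  next
    fix a b assume a: "a \<in> period_vecs" and b: "b \<in> period_vecs"
    have "gprod G x (\<lambda>i. a i + b i) n = gprod G x a n \<otimes> gprod G x b n"
      using a b period_vecs_subset by (intro gprod_add_shift_vec) (auto simp: period_vecs_def)
    then show "(\<lambda>i. a i + b i) \<in> period_vecs"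
      using a b shift(2) by (simp add: period_vecs_def)
  next
    fix a assume a: "a \<in> period_vecs"
    then show "(\<lambda>i. - a i) \<in> period_vecs"
      using shift(3) gprod_neg_shift_vec by (simp add: period_vecs_def)
  qed
qed

lemma gprod_hom_period_vecs:
  "(\<lambda>m. gprod G x m n) \<in> hom ((Zn_group n)\<lparr>carrier := period_vecs\<rparr>) G"
proof (rule homI)
  fix a b assume "a \<in> carrier ((Zn_group n)\<lparr>carrier := period_vecs\<rparr>)"
    and "b \<in> carrier ((Zn_group n)\<lparr>carrier := period_vecs\<rparr>)"
  then have "a \<in> Zn n" "b \<in> shift_vecs" using period_vecs_subset by (auto simp: period_vecs_def)
  then show "gprod G x (a \<otimes>\<^bsub>(Zn_group n)\<lparr>carrier := period_vecs\<rparr>\<^esub> b) n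
      = gprod G x a n \<otimes> gprod G x b n"
    by (simp add: Zn_group_def gprod_add_shift_vec)
qed simp

lemma subgroup_Pset: "subgroup (Pset G x n C) G"
proof -
  have "group ((Zn_group n)\<lparr>carrier := period_vecs\<rparr>)"
    using subgroup.subgroup_is_group[OF subgroup_period_vecs Zn_group_is_group] .
  then interpret gprod: group_hom "(Zn_group n)\<lparr>carrier := period_vecs\<rparr>" G "\<lambda>m. gprod G x m n"
    using gprod_hom_period_vecs by (simp add: group_hom_def group_hom_axioms_def is_group)
  show ?thesis
    using gprod.img_is_subgroup by (simp add: Pset_eq_image)
qed

lemma gprod_iso_period_vecs:
  "(\<lambda>m. gprod G x m n) \<in> iso ((Zn_group n)\<lparr>carrier := period_vecs\<rparr>) (G\<lparr>carrier := Pset G x n C\<rparr>)"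
proof -
  have "bij_betw (\<lambda>m. gprod G x m n) period_vecs (Pset G x n C)"
    using inj_on_subset[OF gprod_inj period_vecs_subset]
    by (simp add: bij_betw_def Pset_eq_image)
  then show ?thesis
    using gprod_hom_period_vecs by (auto simp: iso_def hom_def bij_betw_def)
qed

lemma Vexp_exists:
  assumes "i < n" "j < n"
  shows "\<exists>V::nat>0. x i [^] V \<otimes> x j = x j \<otimes> x i [^] V"
proof -
  have xi: "x i \<in> carrier G" and xj: "x j \<in> carrier G" using assms gens_closed by auto
  have conj: "x i [^] k \<otimes> c \<otimes> inv (x i [^] k) \<in> C #> x j" if "c \<in> {x j}" for k :: nat and c
  proof -
    have c: "c = x j" using that by simp
    have "x i [^] k \<otimes> x j \<otimes> inv (x i [^] k) \<otimes> inv (x j) \<in> C"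
      using commutator_in_C xi xj by simp
    then show ?thesis
      unfolding c using subgroup.rcos_module_rev[OF C_subgroup is_group xj] xi xj by simp
  qed
  have fin: "finite (C #> x j)"
    using C_finite by (simp add: r_coset_def)
  have "\<exists>V::nat>0. \<forall>c\<in>{x j}. x i [^] V \<otimes> c = c \<otimes> x i [^] V"
    by (rule nat_pow_centralizes_if_finite_conjugates[OF xi _ _ fin conj]) (use xj in auto)
  then show ?thesis by simp
qed

lemma vexp_exists:
  assumes "i < n"
  shows "\<exists>v::nat>0. x i [^] v \<in> centralizer_of G C"
proof -
  have xi: "x i \<in> carrier G" using assms gens_closed by auto
  have "x i [^] k \<otimes> c \<otimes> inv (x i [^] k) \<in> C" if "c \<in> C" for c and k :: nat
    using normal.inv_op_closed2[OF C_normal _ that] xi by simp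
  then obtain v :: nat where "v > 0" "\<forall>c\<in>C. x i [^] v \<otimes> c = c \<otimes> x i [^] v"
    using nat_pow_centralizes_if_finite_conjugates[OF xi C_subset C_finite C_finite] by blast
  then show ?thesis using xi by (auto simp: centralizer_of_def)
qed

lemma Vexp_spec:
  assumes "i < n" "j < n"
  shows "0 < Vexp G x i j" "x i [^] Vexp G x i j \<otimes> x j = x j \<otimes> x i [^] Vexp G x i j"
proof -
  have carrier: "x i [^] (V::nat) \<in> carrier G" "x j \<in> carrier G" for V
    using gens_closed assms by auto
  have "\<exists>V::nat. 0 < V \<and> comm G (x i [^] V) (x j) = \<one>"
    using Vexp_exists[OF assms] by (simp add: comm_eq_one_iff[OF carrier])
  then have "0 < Vexp G x i j \<and> comm G (x i [^] Vexp G x i j) (x j) = \<one>"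
    unfolding Vexp_def by (rule LeastI_ex)
  then show "0 < Vexp G x i j" "x i [^] Vexp G x i j \<otimes> x j = x j \<otimes> x i [^] Vexp G x i j"
    using comm_eq_one_iff[OF carrier] by auto
qed

lemma vexp_spec:
  assumes "i < n"
  shows "0 < vexp G x C i" "x i [^] vexp G x C i \<in> centralizer_of G C"
  using LeastI_ex[OF vexp_exists[OF assms]] unfolding vexp_def by auto

lemma mexp_pos:
  assumes i: "i < n"
  shows "0 < mexp G x n C i"
proof -
  let ?A = "Vexp G x i ` {i<..<n} \<union> {vexp G x C i}"
  have A: "{Vexp G x i j | j. i < j \<and> j < n} \<union> {vexp G x C i} = ?A"
    using Setcompr_eq_image[of "Vexp G x i" "{i<..<n}"] by simp
  have "Vexp G x i j \<noteq> 0" if "j \<in> {i<..<n}" for j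
    using Vexp_spec(1)[of i j] i that by simp
  then have "0 \<notin> Vexp G x i ` {i<..<n}" by (metis imageE)
  then have "0 \<notin> ?A" using vexp_spec(1)[OF i] by simp
  moreover have "finite ?A" by simp
  ultimately have "Lcm ?A \<noteq> 0"
    by (simp only: Lcm_0_iff not_False_eq_True)
  then show ?thesis unfolding mexp_def A by (simp only: neq0_conv[symmetric] not_False_eq_True)
qed

lemma x_pow_mexp_commute:
  assumes "i < j" "j < n"
  shows "x i [^] mexp G x n C i \<otimes> x j = x j \<otimes> x i [^] mexp G x n C i"
proof (rule nat_pow_dvd_commute)
  show "x i \<in> carrier G" "x j \<in> carrier G" using gens_closed assms by auto
  show "x i [^] Vexp G x i j \<otimes> x j = x j \<otimes> x i [^] Vexp G x i j"
    using Vexp_spec(2) assms by simp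
  show "Vexp G x i j dvd mexp G x n C i" unfolding mexp_def using assms by (intro dvd_Lcm) blast
qed

lemma x_pow_mexp_centralizes:
  assumes "i < n"
  shows "x i [^] mexp G x n C i \<in> centralizer_of G C"
proof -
  have dvd: "vexp G x C i dvd mexp G x n C i" unfolding mexp_def by (intro dvd_Lcm) blast
  have "x i [^] mexp G x n C i \<otimes> c = c \<otimes> x i [^] mexp G x n C i" if c: "c \<in> C" for c
  proof (rule nat_pow_dvd_commute[OF gens_closed[OF assms] _ _ dvd])
    show "c \<in> carrier G" using c C_subset by blast
    show "x i [^] vexp G x C i \<otimes> c = c \<otimes> x i [^] vexp G x C i"
      using vexp_spec(2)[OF assms] c by (simp add: centralizer_of_def)
  qed
  then show ?thesis using gens_closed[OF assms] by (simp add: centralizer_of_def)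
qed

lemma gprod_mexp_vec:
  "i < n \<Longrightarrow> gprod G x (\<lambda>j. if j = i then int (mexp G x n C i) else 0) n = x i [^] mexp G x n C i"
  by (simp add: gprod_single int_pow_int)

lemma mexp_vec_in_period_vecs:
  assumes i: "i < n"
  shows "(\<lambda>j. if j = i then int (mexp G x n C i) else 0) \<in> period_vecs"
proof -
  let ?e = "\<lambda>j. if j = i then int (mexp G x n C i) else 0"
  have "comm G (gprod G x ?e k) (x k) = \<one>" if k: "k < n" for k
  proof (cases "k \<le> i")
    case True
    then show ?thesis using k gens_closed[OF k] by (simp add: gprod_single comm_eq_one_iff)
  next
    case False
    then have "gprod G x ?e k = x i [^] mexp G x n C i"
      using k by (simp add: gprod_single int_pow_int)
    then show ?thesis
      using False k i gens_closed x_pow_mexp_commute[of i k] by (simp add: comm_eq_one_iff)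
  qed
  then have "?e \<in> shift_vecs" using i by (simp add: shift_vecs_iff_commute Zn_def)
  then show ?thesis
    using x_pow_mexp_centralizes[OF i] gprod_mexp_vec[OF i] by (simp add: period_vecs_def)
qed

lemma Pset_iso_Zn_group: "G\<lparr>carrier := Pset G x n C\<rparr> \<cong> Zn_group n"
proof -
  have "\<exists>t>0. (\<lambda>j. if j = i then t else 0) \<in> period_vecs" if "i < n" for i
    using mexp_vec_in_period_vecs[OF that] mexp_pos[OF that] of_nat_0_less_iff by blast
  then have "Zn_group n \<cong> (Zn_group n)\<lparr>carrier := period_vecs\<rparr>"
    using Zn_group_iso_subgroup subgroup_period_vecs by blast
  also have "\<dots> \<cong> G\<lparr>carrier := Pset G x n C\<rparr>"
    using gprod_iso_period_vecs by (rule is_isoI)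
  finally show ?thesis
    by (rule group.iso_sym[OF Zn_group_is_group])
qed

lemma P_straight_subset_Pset: "P_straight G x n C \<subseteq> Pset G x n C"
  unfolding P_straight_def
proof (rule generate_subgroup_incl[OF _ subgroup_Pset])
  show "{x i [^] mexp G x n C i | i. i < n} \<subseteq> Pset G x n C"
  proof
    fix a assume "a \<in> {x i [^] mexp G x n C i | i. i < n}"
    then obtain i where i: "i < n" "a = x i [^] mexp G x n C i" by blast
    then show "a \<in> Pset G x n C"
      using mexp_vec_in_period_vecs[OF i(1)] gprod_mexp_vec[OF i(1)] by (simp add: Pset_eq_image rev_image_eqI)
  qed
qed

lemma P_straight_nontrivial:
  assumes "0 < n"
  shows "P_straight G x n C \<noteq> {\<one>}"
proof
  assume trivial: "P_straight G x n C = {\<one>}"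
  let ?e = "\<lambda>j::nat. if j = 0 then int (mexp G x n C 0) else 0"
  have "x 0 [^] mexp G x n C 0 \<in> P_straight G x n C"
    unfolding P_straight_def using assms by (intro generate.incl) blast
  then have "gprod G x ?e n = gprod G x (\<lambda>i. 0) n"
    using trivial gprod_mexp_vec[OF assms] by simp
  moreover have "?e \<in> Zn n" "(\<lambda>i. 0) \<in> Zn n" using assms by (auto simp: Zn_def)
  ultimately have "?e = (\<lambda>i. 0)" by (intro inj_onD[OF gprod_inj])
  then have "?e 0 = 0" by (rule fun_cong)
  then have "mexp G x n C 0 = 0" by simp
  then show False using mexp_pos[OF assms] by simp
qed

end

theorem theorem3:
  fixes G :: "('a, 'b) monoid_scheme" and x :: "nat \<Rightarrow> 'a" and n :: nat and C :: "'a set"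
  assumes grp: "group G"
    and n_pos: "1 \<le> n"
    and x_carr: "\<And>i. i < n \<Longrightarrow> x i \<in> carrier G"
    and gen: "generate G (x ` {..<n}) = carrier G"
    and C_def: "C = derived G (carrier G)"
    and C_fin: "finite C"
    and basis: "(\<lambda>r. C #>\<^bsub>G\<^esub> gprod G x r n) \<in> iso (Zn_group n) (G Mod C)"
  shows
    "(\<forall>\<Lambda>. \<Lambda> \<subseteq> carrier G \<and> generate G \<Lambda> = carrier G \<longrightarrow>
        {m \<in> Zn n. \<forall>r \<in> Zn n. \<forall>l \<in> \<Lambda>.
            link G x n C (\<lambda>i. r i + m i) l = link G x n C r l}
        = {m \<in> Zn n. gprod G x m n \<in> Pset G x n C})
     \<and> subgroup (Pset G x n C) G
     \<and> G\<lparr>carrier := Pset G x n C\<rparr> \<cong> Zn_group n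
     \<and> P_straight G x n C \<subseteq> Pset G x n C
     \<and> P_straight G x n C \<noteq> {\<one>\<^bsub>G\<^esub>}"
proof -
  have "C \<lhd> G"
    unfolding C_def by (rule group.derived_is_normal[OF grp group.normal_self[OF grp]])
  then interpret finite_by_free_abelian G x n C
    using grp x_carr C_fin basis
    by (simp add: finite_by_free_abelian_def finite_by_free_abelian_axioms_def
        ordered_products_def ordered_products_axioms_def)
  show ?thesis
    using link_periods_eq_Pset subgroup_Pset Pset_iso_Zn_group P_straight_subset_Pset
      P_straight_nontrivial n_pos by auto
qed

end
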